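(* Let $D$ be a diagram of a link $L$, fix $a^*\in A(D)$, and let $M_0$ be the $\Lambda$-submodule of $M_A^{red}(L)$ generated by the elements $(\gamma_D(a)-\gamma_D(a^* ))\otimes1$, $a\in A(D)$. Then there is a $\Lambda$-linear epimorphism $e_D:M_0\to Dis(MQ(L))$ with $e_D((\gamma_D(a)-\gamma_D(a^* ))\otimes1)=d_a=\beta_a\beta_{a^*}^{-1}$ for all $a\in A(D)$, where $Dis(MQ(L))$ carries the $\Lambda$-module structure $m\cdot d=d^m$, $t^n\cdot d=\beta_{a^*}^nd\beta_{a^*}^{-n}$ ($m,n\in\mathbb Z$), written additively.
   Context: Let $L=K_1\cup\dots\cup K_\mu$ be an oriented classical link with diagram $D$. $A(D)$ is the set of arcs of $D$ and $C(D)$ the set of crossings; $\kappa_D:A(D)\to\{1,\dots,\mu\}$ sends an arc to the index of its component. At a crossing $c$, $a_1$ is the overpassing arc, $a_2$ the underpassing arc on the right of $a_1$ (with respect to the orientation of $a_1$), $a_3$ the underpassing arc on the left of $a_1$. $\Lambda_\mu=\mathbb Z[t_1^{\pm1},\dots,t_\mu^{\pm1}]$, $\Lambda=\mathbb Z[t^{\pm1}]$, $\tau:\Lambda_\mu\to\Lambda$ the ring homomorphism with $\tau(t_i)=t$, making $\Lambda$ a $\Lambda_\mu$-module. $\rho_D:\Lambda_\mu^{C(D)}\to\Lambda_\mu^{A(D)}$ is the $\Lambda_\mu$-linear map with $\rho_D(c)=(1-t_{\kappa_D(a_2)})a_1+t_{\kappa_D(a_1)}a_2-a_3$; $M_A(L)=\operatorname{coker}\rho_D$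 with quotient map $\gamma_D$; $M_A^{red}(L)=M_A(L)\otimes_{\Lambda_\mu}\Lambda$. A quandle is a set $Q$ with a binary operation $\triangleright$ such that $x\triangleright x=x$, each translation $\beta_y(x)=x\triangleright y$ is a bijection, and $(x\triangleright y)\triangleright z=(x\triangleright z)\triangleright(y\triangleright z)$; it is medial if $(w\triangleright x)\triangleright(y\triangleright z)=(w\triangleright y)\triangleright(x\triangleright z)$. The displacement group $Dis(Q)$ is the subgroup of the automorphism group of $Q$ generated by all $\beta_y\beta_z^{-1}$ (abelian for medial $Q$). $MQ(L)$ is the medial quandle generated by $A(D)$ subject to $a_2\triangleright a_1=a_3$ at every crossing. *)

theory Defs
  imports "HOL-Library.Poly_Mapping" "HOL-Library.Function_Algebras" "HOL-Algebra.Bij" "HOL-Algebra.Generated_Groups"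
begin

text \<open>Lambda = Z[t,t^-1] is the integral group ring of (int,+): finitely supported
  int-valued functions on int, with convolution product. Lambda_mu = Z[t_1^pm,...,t_mu^pm]
  is the group ring of Z^mu, with exponent vectors (nat =>0 int) (variables indexed by
  1..mu).\<close>

type_synonym laurent = "int \<Rightarrow>\<^sub>0 int"
type_synonym mlaurent = "(nat \<Rightarrow>\<^sub>0 int) \<Rightarrow>\<^sub>0 int"

definition lt :: laurent where "lt = Poly_Mapping.single 1 1"

definition mlt :: "nat \<Rightarrow> mlaurent" where
  "mlt i = Poly_Mapping.single (Poly_Mapping.single i 1) 1"

text \<open>tau : Lambda_mu -> Lambda, t_i |-> t  (monomial t^m |-> t^(sum of exponents)).\<close>
definition tau :: "mlaurent \<Rightarrow> laurent" where
  "tau p = (\<Sum>m\<in>Poly_Mapping.keys p. Poly_Mapping.single (\<Sum>i\<in>Poly_Mapping.keys m. Poly_Mapping.lookup m i) (Poly_Mapping.lookup p m))"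

text \<open>A diagram is given combinatorially: arcs form a finite type 'a, crossings a finite
  type 'c; at a crossing c, a1 c is the overpassing arc, a2 c the underpassing arc on the
  right of a1 c, a3 c the underpassing arc on the left; kappa gives the component index.\<close>

definition delta :: "'a \<Rightarrow> 'a \<Rightarrow> 'r::{zero,one}" where
  "delta a = (\<lambda>x. if x = a then 1 else 0)"

definition vscale :: "'r::times \<Rightarrow> ('a \<Rightarrow> 'r) \<Rightarrow> ('a \<Rightarrow> 'r)" where
  "vscale l v = (\<lambda>x. l * v x)"

definition rhoD :: "('a \<Rightarrow> nat) \<Rightarrow> ('c \<Rightarrow> 'a) \<Rightarrow> ('c \<Rightarrow> 'a) \<Rightarrow> ('c \<Rightarrow> 'a)
    \<Rightarrow> 'c \<Rightarrow> 'a \<Rightarrow> mlaurent" where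
  "rhoD kappa a1 a2 a3 c =
     vscale (1 - mlt (kappa (a2 c))) (delta (a1 c)) + vscale (mlt (kappa (a1 c))) (delta (a2 c))
     - delta (a3 c)"

definition relsub :: "('a \<Rightarrow> nat) \<Rightarrow> ('c::finite \<Rightarrow> 'a) \<Rightarrow> ('c \<Rightarrow> 'a) \<Rightarrow> ('c \<Rightarrow> 'a)
    \<Rightarrow> ('a \<Rightarrow> laurent) set" where
  "relsub kappa a1 a2 a3 =
     range (\<lambda>lam::'c \<Rightarrow> laurent. \<Sum>c\<in>UNIV. vscale (lam c) (tau \<circ> rhoD kappa a1 a2 a3 c))"

text \<open>Class of v in M_A^red(L) = coker(rho_D (x) Lambda) = M_A(L) (x) Lambda.\<close>
definition mcls :: "('a \<Rightarrow> nat) \<Rightarrow> ('c::finite \<Rightarrow> 'a) \<Rightarrow> ('c \<Rightarrow> 'a) \<Rightarrow> ('c \<Rightarrow> 'a)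
    \<Rightarrow> ('a \<Rightarrow> laurent) \<Rightarrow> ('a \<Rightarrow> laurent) set" where
  "mcls kappa a1 a2 a3 v = {v + r | r. r \<in> relsub kappa a1 a2 a3}"

definition Mred :: "('a \<Rightarrow> nat) \<Rightarrow> ('c::finite \<Rightarrow> 'a) \<Rightarrow> ('c \<Rightarrow> 'a) \<Rightarrow> ('c \<Rightarrow> 'a)
    \<Rightarrow> ('a \<Rightarrow> laurent) set set" where
  "Mred kappa a1 a2 a3 = range (mcls kappa a1 a2 a3)"

definition madd :: "('a \<Rightarrow> nat) \<Rightarrow> ('c::finite \<Rightarrow> 'a) \<Rightarrow> ('c \<Rightarrow> 'a) \<Rightarrow> ('c \<Rightarrow> 'a)
    \<Rightarrow> ('a \<Rightarrow> laurent) set \<Rightarrow> ('a \<Rightarrow> laurent) set \<Rightarrow> ('a \<Rightarrow> laurent) set" where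
  "madd kappa a1 a2 a3 X Y = mcls kappa a1 a2 a3 ((SOME x. x \<in> X) + (SOME y. y \<in> Y))"

definition msmult :: "('a \<Rightarrow> nat) \<Rightarrow> ('c::finite \<Rightarrow> 'a) \<Rightarrow> ('c \<Rightarrow> 'a) \<Rightarrow> ('c \<Rightarrow> 'a)
    \<Rightarrow> laurent \<Rightarrow> ('a \<Rightarrow> laurent) set \<Rightarrow> ('a \<Rightarrow> laurent) set" where
  "msmult kappa a1 a2 a3 l X = mcls kappa a1 a2 a3 (vscale l (SOME x. x \<in> X))"

definition M0 :: "('a::finite \<Rightarrow> nat) \<Rightarrow> ('c::finite \<Rightarrow> 'a) \<Rightarrow> ('c \<Rightarrow> 'a) \<Rightarrow> ('c \<Rightarrow> 'a)
    \<Rightarrow> 'a \<Rightarrow> ('a \<Rightarrow> laurent) set set" where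
  "M0 kappa a1 a2 a3 astar =
     {mcls kappa a1 a2 a3 (\<Sum>a\<in>UNIV. vscale (lam a) (delta a - delta astar)) | lam. True}"

text \<open>Terms in the signature of quandles: x |> y and the right division x |>^-1 y
  (so that beta_y has inverse x |-> x |>^-1 y).\<close>
datatype 'a qterm = Gen 'a | Op "'a qterm" "'a qterm" | OpInv "'a qterm" "'a qterm"

inductive mq_eq :: "('c \<Rightarrow> 'a) \<Rightarrow> ('c \<Rightarrow> 'a) \<Rightarrow> ('c \<Rightarrow> 'a) \<Rightarrow> 'a qterm \<Rightarrow> 'a qterm \<Rightarrow> bool"
  for a1 a2 a3 where
  refl: "mq_eq a1 a2 a3 x x"
| sym: "mq_eq a1 a2 a3 x y \<Longrightarrow> mq_eq a1 a2 a3 y x"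
| trans: "mq_eq a1 a2 a3 x y \<Longrightarrow> mq_eq a1 a2 a3 y z \<Longrightarrow> mq_eq a1 a2 a3 x z"
| cong_Op: "mq_eq a1 a2 a3 x x' \<Longrightarrow> mq_eq a1 a2 a3 y y' \<Longrightarrow> mq_eq a1 a2 a3 (Op x y) (Op x' y')"
| cong_OpInv: "mq_eq a1 a2 a3 x x' \<Longrightarrow> mq_eq a1 a2 a3 y y' \<Longrightarrow>
      mq_eq a1 a2 a3 (OpInv x y) (OpInv x' y')"
| idem: "mq_eq a1 a2 a3 (Op x x) x"
| inv1: "mq_eq a1 a2 a3 (Op (OpInv x y) y) x"
| inv2: "mq_eq a1 a2 a3 (OpInv (Op x y) y) x"
| distr: "mq_eq a1 a2 a3 (Op (Op x y) z) (Op (Op x z) (Op y z))"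
| medial: "mq_eq a1 a2 a3 (Op (Op w x) (Op y z)) (Op (Op w y) (Op x z))"
| crossing: "mq_eq a1 a2 a3 (Op (Gen (a2 c)) (Gen (a1 c))) (Gen (a3 c))"

definition mq_rel :: "('c \<Rightarrow> 'a) \<Rightarrow> ('c \<Rightarrow> 'a) \<Rightarrow> ('c \<Rightarrow> 'a) \<Rightarrow> ('a qterm \<times> 'a qterm) set" where
  "mq_rel a1 a2 a3 = {(x, y). mq_eq a1 a2 a3 x y}"

definition MQ :: "('c \<Rightarrow> 'a) \<Rightarrow> ('c \<Rightarrow> 'a) \<Rightarrow> ('c \<Rightarrow> 'a) \<Rightarrow> 'a qterm set set" where
  "MQ a1 a2 a3 = UNIV // mq_rel a1 a2 a3"

definition mq_gen :: "('c \<Rightarrow> 'a) \<Rightarrow> ('c \<Rightarrow> 'a) \<Rightarrow> ('c \<Rightarrow> 'a) \<Rightarrow> 'a \<Rightarrow> 'a qterm set" where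
  "mq_gen a1 a2 a3 a = mq_rel a1 a2 a3 `` {Gen a}"

definition mq_op :: "('c \<Rightarrow> 'a) \<Rightarrow> ('c \<Rightarrow> 'a) \<Rightarrow> ('c \<Rightarrow> 'a)
    \<Rightarrow> 'a qterm set \<Rightarrow> 'a qterm set \<Rightarrow> 'a qterm set" where
  "mq_op a1 a2 a3 X Y = mq_rel a1 a2 a3 `` {Op (SOME x. x \<in> X) (SOME y. y \<in> Y)}"

definition beta :: "('c \<Rightarrow> 'a) \<Rightarrow> ('c \<Rightarrow> 'a) \<Rightarrow> ('c \<Rightarrow> 'a)
    \<Rightarrow> 'a qterm set \<Rightarrow> 'a qterm set \<Rightarrow> 'a qterm set" where
  "beta a1 a2 a3 Y = (\<lambda>X\<in>MQ a1 a2 a3. mq_op a1 a2 a3 X Y)"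

abbreviation PermG :: "('c \<Rightarrow> 'a) \<Rightarrow> ('c \<Rightarrow> 'a) \<Rightarrow> ('c \<Rightarrow> 'a)
    \<Rightarrow> ('a qterm set \<Rightarrow> 'a qterm set) monoid" where
  "PermG a1 a2 a3 \<equiv> BijGroup (MQ a1 a2 a3)"

definition Dis :: "('c \<Rightarrow> 'a) \<Rightarrow> ('c \<Rightarrow> 'a) \<Rightarrow> ('c \<Rightarrow> 'a) \<Rightarrow> ('a qterm set \<Rightarrow> 'a qterm set) set" where
  "Dis a1 a2 a3 = generate (PermG a1 a2 a3)
     {beta a1 a2 a3 y \<otimes>\<^bsub>PermG a1 a2 a3\<^esub> inv\<^bsub>PermG a1 a2 a3\<^esub> (beta a1 a2 a3 z)
       | y z. y \<in> MQ a1 a2 a3 \<and> z \<in> MQ a1 a2 a3}"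

definition dgen :: "('c \<Rightarrow> 'a) \<Rightarrow> ('c \<Rightarrow> 'a) \<Rightarrow> ('c \<Rightarrow> 'a) \<Rightarrow> 'a \<Rightarrow> 'a
    \<Rightarrow> 'a qterm set \<Rightarrow> 'a qterm set" where
  "dgen a1 a2 a3 astar a = beta a1 a2 a3 (mq_gen a1 a2 a3 a)
      \<otimes>\<^bsub>PermG a1 a2 a3\<^esub> inv\<^bsub>PermG a1 a2 a3\<^esub> (beta a1 a2 a3 (mq_gen a1 a2 a3 astar))"

text \<open>Lambda-module structure on Dis(MQ(L)) (written additively, i.e. + is composition):
  m.d = d^m, t^n.d = beta_{a*}^n d beta_{a*}^-n, hence
  (sum_n c_n t^n).d = sum_n c_n (t^n.d) = prod_n (beta_{a*}^n d beta_{a*}^-n)^{c_n}.\<close>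
definition dis_smult :: "('c \<Rightarrow> 'a) \<Rightarrow> ('c \<Rightarrow> 'a) \<Rightarrow> ('c \<Rightarrow> 'a) \<Rightarrow> 'a \<Rightarrow> laurent
    \<Rightarrow> ('a qterm set \<Rightarrow> 'a qterm set) \<Rightarrow> ('a qterm set \<Rightarrow> 'a qterm set)" where
  "dis_smult a1 a2 a3 astar l d =
    (let G = PermG a1 a2 a3; b = beta a1 a2 a3 (mq_gen a1 a2 a3 astar) in
     foldr (\<lambda>n acc. ((b [^]\<^bsub>G\<^esub> n \<otimes>\<^bsub>G\<^esub> d \<otimes>\<^bsub>G\<^esub> b [^]\<^bsub>G\<^esub> (- n))
                        [^]\<^bsub>G\<^esub> (Poly_Mapping.lookup l n)) \<otimes>\<^bsub>G\<^esub> acc)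
       (sorted_list_of_set (Poly_Mapping.keys l)) \<one>\<^bsub>G\<^esub>)"

end

theory Submission
  imports Defs "HOL-Algebra.FiniteProduct"
begin

text \<open>The translations of MQ(L) satisfy beta_(x |> y) = beta_y beta_x beta_y^-1, and mediality
  makes the displacements d_x = beta_x beta_a*^-1 commute. Hence Dis(MQ(L)), which they generate,
  is an abelian group normalised by beta_a*, i.e. a Lambda-module with t acting by conjugation.
  The Lambda-linear map Lambda^A(D) -> Dis(MQ(L)) sending the arc a to d_a is onto, because
  d_(x |> y) = d_y + t (d_x - d_y) expresses every displacement through those of the arcs; and it
  kills the image of rho_D (x) Lambda, because the crossing relation a2 |> a1 = a3 becomes
  d_a3 = (1 - t) d_a1 + t d_a2. So it factors through M_A^red(L), and its restriction to M_0 is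
  the required epimorphism.\<close>

section \<open>Commuting elements and conjugation\<close>

lemma (in group) inv_mult_cancel [simp]:
  "x \<in> carrier G \<Longrightarrow> y \<in> carrier G \<Longrightarrow> inv x \<otimes> (x \<otimes> y) = y"
  by (simp add: m_assoc[symmetric])

lemma (in group) inv_commute:
  assumes x: "x \<in> carrier G" and y: "y \<in> carrier G" and xy: "x \<otimes> y = y \<otimes> x"
  shows "inv x \<otimes> y = y \<otimes> inv x"
proof -
  have "inv x \<otimes> y = inv x \<otimes> (y \<otimes> x) \<otimes> inv x" using x y by (simp add: m_assoc)
  also have "\<dots> = inv x \<otimes> (x \<otimes> y) \<otimes> inv x" by (simp only: xy)
  also have "\<dots> = y \<otimes> inv x" using x y by (simp add: m_assoc[symmetric])
  finally show ?thesis .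
qed

lemma (in group) subgroup_commutant:
  assumes T: "T \<subseteq> carrier G"
  shows "subgroup {x \<in> carrier G. \<forall>y\<in>T. x \<otimes> y = y \<otimes> x} G"
proof (rule subgroup.intro)
  fix x z assume "x \<in> {x \<in> carrier G. \<forall>y\<in>T. x \<otimes> y = y \<otimes> x}"
    and "z \<in> {x \<in> carrier G. \<forall>y\<in>T. x \<otimes> y = y \<otimes> x}"
  hence x: "x \<in> carrier G" "\<And>y. y \<in> T \<Longrightarrow> x \<otimes> y = y \<otimes> x"
    and z: "z \<in> carrier G" "\<And>y. y \<in> T \<Longrightarrow> z \<otimes> y = y \<otimes> z" by auto
  have "x \<otimes> z \<otimes> y = y \<otimes> (x \<otimes> z)" if y: "y \<in> T" for y
  proof -
    have yc: "y \<in> carrier G" using y T by blast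
    have "x \<otimes> z \<otimes> y = x \<otimes> (y \<otimes> z)" using x(1) z yc by (simp add: m_assoc z(2)[OF y])
    also have "\<dots> = y \<otimes> (x \<otimes> z)" using x(1) z(1) yc by (simp add: m_assoc[symmetric] x(2)[OF y])
    finally show ?thesis .
  qed
  thus "x \<otimes> z \<in> {x \<in> carrier G. \<forall>y\<in>T. x \<otimes> y = y \<otimes> x}" using x(1) z(1) by blast
next
  fix x assume "x \<in> {x \<in> carrier G. \<forall>y\<in>T. x \<otimes> y = y \<otimes> x}"
  thus "inv x \<in> {x \<in> carrier G. \<forall>y\<in>T. x \<otimes> y = y \<otimes> x}"
    using T inv_commute by blast
qed (use T in auto)

lemma (in group) generate_commute:
  assumes S: "S \<subseteq> carrier G" and comm: "\<And>x y. x \<in> S \<Longrightarrow> y \<in> S \<Longrightarrow> x \<otimes> y = y \<otimes> x"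
    and x: "x \<in> generate G S" and y: "y \<in> generate G S"
  shows "x \<otimes> y = y \<otimes> x"
proof -
  have "generate G S \<subseteq> {x \<in> carrier G. \<forall>y\<in>S. x \<otimes> y = y \<otimes> x}"
    using S comm by (intro generate_subgroup_incl subgroup_commutant) auto
  hence "S \<subseteq> {x \<in> carrier G. \<forall>y\<in>generate G S. x \<otimes> y = y \<otimes> x}"
    using S by auto
  hence "generate G S \<subseteq> {x \<in> carrier G. \<forall>y\<in>generate G S. x \<otimes> y = y \<otimes> x}"
    by (rule generate_subgroup_incl[OF _ subgroup_commutant]) (use S generate_in_carrier in blast)
  thus ?thesis using x y by blast
qed

lemma (in group) conj_hom: "g \<in> carrier G \<Longrightarrow> (\<lambda>x. g \<otimes> x \<otimes> inv g) \<in> hom G G"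
  by (rule homI) (simp_all add: m_assoc inv_solve_left)

lemma (in group) generate_conj_closed:
  assumes S: "S \<subseteq> carrier G" and g: "g \<in> carrier G"
    and gen: "\<And>s. s \<in> S \<Longrightarrow> g \<otimes> s \<otimes> inv g \<in> generate G S"
    and x: "x \<in> generate G S"
  shows "g \<otimes> x \<otimes> inv g \<in> generate G S"
proof -
  interpret conj: group_hom G G "\<lambda>x. g \<otimes> x \<otimes> inv g"
    by (simp add: group_hom_axioms_def group_hom_def is_group conj_hom g)
  have "(\<lambda>x. g \<otimes> x \<otimes> inv g) ` generate G S = generate G ((\<lambda>x. g \<otimes> x \<otimes> inv g) ` S)"
    by (rule conj.generate_img[OF S, symmetric])
  also have "\<dots> \<subseteq> generate G S"
    using gen by (intro generate_subgroup_incl generate_is_subgroup S) auto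
  finally show ?thesis using x by blast
qed

section \<open>Specialising all variables to t\<close>

abbreviation total_degree :: "(nat \<Rightarrow>\<^sub>0 int) \<Rightarrow> int" where
  "total_degree m \<equiv> (\<Sum>i\<in>Poly_Mapping.keys m. Poly_Mapping.lookup m i)"

lemma tau_eq_sum_superset:
  assumes "finite K" "Poly_Mapping.keys p \<subseteq> K"
  shows "tau p = (\<Sum>m\<in>K. Poly_Mapping.single (total_degree m) (Poly_Mapping.lookup p m))"
  unfolding tau_def by (rule sum.mono_neutral_left[OF assms]) (auto simp: in_keys_iff)

lemma tau_add: "tau (p + q) = tau p + tau q"
proof -
  let ?K = "Poly_Mapping.keys p \<union> Poly_Mapping.keys q"
  have "tau (p + q) = (\<Sum>m\<in>?K. Poly_Mapping.single (total_degree m) (Poly_Mapping.lookup (p + q) m))"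
    by (rule tau_eq_sum_superset) (auto dest: keys_add[THEN subsetD])
  also have "\<dots> = (\<Sum>m\<in>?K. Poly_Mapping.single (total_degree m) (Poly_Mapping.lookup p m))
     + (\<Sum>m\<in>?K. Poly_Mapping.single (total_degree m) (Poly_Mapping.lookup q m))"
    by (simp add: lookup_add single_add sum.distrib)
  also have "\<dots> = tau p + tau q" by (simp add: tau_eq_sum_superset[symmetric])
  finally show ?thesis .
qed

lemma tau_diff: "tau (p - q) = tau p - tau q"
  using tau_add[of "p - q" q] by (simp add: eq_diff_eq)

lemma tau_zero [simp]: "tau 0 = 0" by (simp add: tau_def)

lemma tau_one [simp]: "tau 1 = 1" by (simp add: tau_def)

lemma tau_mlt [simp]: "tau (mlt i) = lt" by (simp add: tau_def mlt_def lt_def)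

lemma tau_rhoD: "tau \<circ> rhoD kappa a1 a2 a3 c =
   vscale (1 - lt) (delta (a1 c)) + vscale lt (delta (a2 c)) - delta (a3 c)"
  by (rule ext) (simp add: rhoD_def vscale_def delta_def tau_add tau_diff)

section \<open>Laurent polynomials acting by conjugation\<close>

text \<open>An abelian subgroup H normalised by b is a Lambda-module via t . d = b d b^-1, written
  multiplicatively; act is defined in exactly the shape of dis_smult.\<close>

locale laurent_action = group G for G (structure) +
  fixes b :: 'g and H :: "'g set"
  assumes b_closed [simp]: "b \<in> carrier G"
    and subgroup_H: "subgroup H G"
    and H_commute: "x \<in> H \<Longrightarrow> y \<in> H \<Longrightarrow> x \<otimes> y = y \<otimes> x"
    and conj_H_closed: "x \<in> H \<Longrightarrow> b \<otimes> x \<otimes> inv b \<in> H"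
    and conj_inv_H_closed: "x \<in> H \<Longrightarrow> inv b \<otimes> x \<otimes> b \<in> H"
begin

abbreviation HG where "HG \<equiv> G\<lparr>carrier := H\<rparr>"

lemma comm_group_HG: "comm_group HG"
  by (rule group.group_comm_groupI[OF subgroup.subgroup_is_group[OF subgroup_H is_group]])
    (simp add: H_commute)

sublocale HG: comm_group HG by (rule comm_group_HG)

lemma H_carrier [simp]: "x \<in> H \<Longrightarrow> x \<in> carrier G"
  using subgroup.mem_carrier[OF subgroup_H] .

lemma H_mult_closed [simp]: "x \<in> H \<Longrightarrow> y \<in> H \<Longrightarrow> x \<otimes> y \<in> H"
  using subgroup.m_closed[OF subgroup_H] .

lemma H_inv_closed [simp]: "x \<in> H \<Longrightarrow> inv x \<in> H"
  using subgroup.m_inv_closed[OF subgroup_H] .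

lemma H_one_closed [simp]: "\<one> \<in> H"
  using subgroup.one_closed[OF subgroup_H] .

lemma H_int_pow_closed [simp]: "x \<in> H \<Longrightarrow> x [^] (k::int) \<in> H"
  by (rule subgroup_int_pow_closed[OF subgroup_H])

definition shift :: "int \<Rightarrow> 'g \<Rightarrow> 'g" where
  "shift n d = b [^] n \<otimes> d \<otimes> b [^] (- n)"

lemma shift_zero [simp]: "d \<in> carrier G \<Longrightarrow> shift 0 d = d"
  by (simp add: shift_def)

lemma shift_one [simp]: "shift n \<one> = \<one>"
  by (simp add: shift_def m_assoc int_pow_neg)

lemma shift_mult:
  "x \<in> carrier G \<Longrightarrow> y \<in> carrier G \<Longrightarrow> shift n (x \<otimes> y) = shift n x \<otimes> shift n y"
  by (simp add: shift_def m_assoc int_pow_neg inv_solve_left)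

lemma shift_shift:
  assumes "d \<in> carrier G" shows "shift m (shift n d) = shift (m + n) d"
proof -
  have "b [^] (m + n) = b [^] m \<otimes> b [^] n" "b [^] (- (m + n)) = b [^] (- n) \<otimes> b [^] (- m)"
    by (simp_all add: int_pow_mult[symmetric] add.commute)
  thus ?thesis using assms by (simp add: shift_def m_assoc)
qed

lemma shift_plus_one: "d \<in> carrier G \<Longrightarrow> shift 1 d = b \<otimes> d \<otimes> inv b"
  by (simp add: shift_def int_pow_neg)

lemma shift_minus_one: "d \<in> carrier G \<Longrightarrow> shift (- 1) d = inv b \<otimes> d \<otimes> b"
  by (simp add: shift_def int_pow_neg)

lemma shift_closed [simp]:
  assumes d: "d \<in> H" shows "shift n d \<in> H"
proof (induction n rule: int_induct[where k = 0])
  case (step1 i)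
  hence "shift 1 (shift i d) \<in> H" using d by (simp add: shift_plus_one conj_H_closed)
  thus ?case using d by (simp add: shift_shift add.commute)
next
  case (step2 i)
  hence "shift (- 1) (shift i d) \<in> H" using d by (simp add: shift_minus_one conj_inv_H_closed)
  thus ?case using d by (simp add: shift_shift)
qed (use d in simp)

definition act :: "laurent \<Rightarrow> 'g \<Rightarrow> 'g" where
  "act l d = foldr (\<lambda>n acc. shift n d [^] Poly_Mapping.lookup l n \<otimes> acc)
     (sorted_list_of_set (Poly_Mapping.keys l)) \<one>"

lemma foldr_mult_eq_finprod:
  "distinct xs \<Longrightarrow> (\<And>n. n \<in> set xs \<Longrightarrow> f n \<in> H) \<Longrightarrow>
   foldr (\<lambda>n acc. f n \<otimes> acc) xs \<one> = finprod HG f (set xs)"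
  by (induction xs) (simp_all add: Pi_def)

lemma act_eq_finprod:
  assumes d: "d \<in> H" and K: "finite K" "Poly_Mapping.keys l \<subseteq> K"
  shows "act l d = finprod HG (\<lambda>n. shift n d [^] Poly_Mapping.lookup l n) K"
proof -
  have "act l d = finprod HG (\<lambda>n. shift n d [^] Poly_Mapping.lookup l n) (Poly_Mapping.keys l)"
    unfolding act_def using d by (subst foldr_mult_eq_finprod) simp_all
  also have "\<dots> = finprod HG (\<lambda>n. shift n d [^] Poly_Mapping.lookup l n) K"
    using d by (intro HG.finprod_mono_neutral_cong_left[OF K]) (auto simp: in_keys_iff)
  finally show ?thesis .
qed

lemmas act_eq_finprod_keys = act_eq_finprod[OF _ finite_keys subset_refl]

lemma act_closed [simp]: "d \<in> H \<Longrightarrow> act l d \<in> H"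
  using HG.finprod_closed[of "\<lambda>n. shift n d [^] Poly_Mapping.lookup l n" "Poly_Mapping.keys l"]
  by (simp add: act_eq_finprod_keys)

lemma act_add: "d \<in> H \<Longrightarrow> act (l1 + l2) d = act l1 d \<otimes> act l2 d"
proof -
  assume d: "d \<in> H"
  let ?K = "Poly_Mapping.keys l1 \<union> Poly_Mapping.keys l2"
  have "act (l1 + l2) d = finprod HG (\<lambda>n. shift n d [^] Poly_Mapping.lookup (l1 + l2) n) ?K"
    by (rule act_eq_finprod[OF d]) (simp_all add: keys_add)
  also have "\<dots> = finprod HG (\<lambda>n. shift n d [^] Poly_Mapping.lookup l1 n
                                  \<otimes>\<^bsub>HG\<^esub> shift n d [^] Poly_Mapping.lookup l2 n) ?K"
    using d by (intro HG.finprod_cong') (auto simp: lookup_add int_pow_mult)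
  also have "\<dots> = finprod HG (\<lambda>n. shift n d [^] Poly_Mapping.lookup l1 n) ?K
                 \<otimes>\<^bsub>HG\<^esub> finprod HG (\<lambda>n. shift n d [^] Poly_Mapping.lookup l2 n) ?K"
    using d by (intro HG.finprod_multf) auto
  also have "\<dots> = act l1 d \<otimes> act l2 d"
    using d by (simp add: act_eq_finprod[of d ?K])
  finally show ?thesis .
qed

lemma act_zero [simp]: "d \<in> H \<Longrightarrow> act 0 d = \<one>"
  by (simp add: act_def)

lemma shift_inv: "d \<in> carrier G \<Longrightarrow> shift n (inv d) = inv shift n d"
  by (simp add: shift_def inv_mult_group m_assoc int_pow_neg)

lemma act_single: "d \<in> H \<Longrightarrow> act (Poly_Mapping.single n 1) d = shift n d"
  using HG.finprod_insert[of "{}" n "\<lambda>k. shift k d [^] Poly_Mapping.lookup (Poly_Mapping.single n 1) k"]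
  by (simp add: act_eq_finprod[of d "{n}"])

lemma act_1 [simp]: "d \<in> H \<Longrightarrow> act 1 d = d"
  using act_single[of d 0] by (simp add: one_poly_mapping.abs_eq single.abs_eq)

lemma act_diff: "d \<in> H \<Longrightarrow> act (l1 - l2) d = act l1 d \<otimes> inv act l2 d"
  using act_add[of d "l1 - l2" l2] by (simp add: m_assoc)

lemma act_mult:
  assumes d: "d \<in> H" and e: "e \<in> H" shows "act l (d \<otimes> e) = act l d \<otimes> act l e"
proof -
  let ?K = "Poly_Mapping.keys l"
  have "act l (d \<otimes> e) = finprod HG (\<lambda>n. shift n d [^] Poly_Mapping.lookup l n
                                  \<otimes>\<^bsub>HG\<^esub> shift n e [^] Poly_Mapping.lookup l n) ?K"
    using d e by (simp add: act_eq_finprod[of _ ?K] shift_mult int_pow_mult_distrib H_commute)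
  also have "\<dots> = finprod HG (\<lambda>n. shift n d [^] Poly_Mapping.lookup l n) ?K
                 \<otimes>\<^bsub>HG\<^esub> finprod HG (\<lambda>n. shift n e [^] Poly_Mapping.lookup l n) ?K"
    using d e by (intro HG.finprod_multf) auto
  also have "\<dots> = act l d \<otimes> act l e"
    using d e by (simp add: act_eq_finprod_keys)
  finally show ?thesis .
qed

lemma act_one [simp]: "act l \<one> = \<one>"
  using act_mult[of \<one> \<one> l] act_closed[of \<one> l] by (simp add: l_cancel_one')

lemma act_finprod:
  assumes "finite A" "f \<in> A \<rightarrow> H"
  shows "act l (finprod HG f A) = finprod HG (\<lambda>a. act l (f a)) A"
  using assms
proof (induction A rule: finite_induct)
  case (insert x F)
  have "f \<in> F \<rightarrow> carrier HG" "f x \<in> carrier HG" "(\<lambda>a. act l (f a)) \<in> F \<rightarrow> carrier HG"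
    using insert.prems by (auto simp: Pi_iff)
  thus ?case using insert HG.finprod_closed[of f F] by (simp add: act_mult)
qed simp

lemma shift_act: "d \<in> H \<Longrightarrow> shift n (act l d) = act (Poly_Mapping.single n 1 * l) d"
proof (induction l rule: frag_induction[OF subset_UNIV])
  case 1 thus ?case by simp
next
  case (2 x) thus ?case by (simp add: act_single mult_single shift_shift)
next
  case (3 p q) thus ?case by (simp add: act_diff right_diff_distrib shift_mult shift_inv)
qed

lemma act_act: "d \<in> H \<Longrightarrow> act (l1 * l2) d = act l1 (act l2 d)"
proof (induction l1 rule: frag_induction[OF subset_UNIV])
  case (2 x) thus ?case by (simp add: act_single shift_act)
next
  case (3 p q) thus ?case by (simp add: act_diff left_diff_distrib)
qed simp

definition lincomb :: "('i::finite \<Rightarrow> 'g) \<Rightarrow> ('i \<Rightarrow> laurent) \<Rightarrow> 'g" where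
  "lincomb g v = finprod HG (\<lambda>i. act (v i) (g i)) UNIV"

context
  fixes g :: "'i::finite \<Rightarrow> 'g"
  assumes g: "\<And>i. g i \<in> H"
begin

lemma lincomb_closed [simp]: "lincomb g v \<in> H"
  using HG.finprod_closed[of "\<lambda>i. act (v i) (g i)" UNIV] g by (simp add: lincomb_def)

lemma lincomb_add: "lincomb g (v + w) = lincomb g v \<otimes> lincomb g w"
proof -
  have "lincomb g (v + w) = finprod HG (\<lambda>i. act (v i) (g i) \<otimes>\<^bsub>HG\<^esub> act (w i) (g i)) UNIV"
    unfolding lincomb_def using g by (simp add: act_add)
  also have "\<dots> = lincomb g v \<otimes> lincomb g w"
    unfolding lincomb_def using g by (subst HG.finprod_multf) auto
  finally show ?thesis .
qed

lemma lincomb_zero [simp]: "lincomb g 0 = \<one>"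
  using g HG.finprod_one[of UNIV] by (simp add: lincomb_def)

lemma lincomb_diff: "lincomb g (v - w) = lincomb g v \<otimes> inv lincomb g w"
  using lincomb_add[of "v - w" w] by (simp add: m_assoc)

lemma lincomb_vscale: "lincomb g (vscale l v) = act l (lincomb g v)"
  unfolding lincomb_def using g by (simp add: act_finprod Pi_def vscale_def act_act)

lemma lincomb_delta: "lincomb g (delta i) = g i"
proof -
  have "lincomb g (delta i) = finprod HG (\<lambda>j. if i = j then g j else \<one>\<^bsub>HG\<^esub>) UNIV"
    unfolding lincomb_def delta_def using g by (intro HG.finprod_cong') auto
  also have "\<dots> = g i"
    using g by (subst HG.finprod_singleton) auto
  finally show ?thesis .
qed

lemma lincomb_sum: "finite A \<Longrightarrow> lincomb g (\<Sum>c\<in>A. f c) = finprod HG (\<lambda>c. lincomb g (f c)) A"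
proof (induction A rule: finite_induct)
  case (insert c A)
  thus ?case by (simp del: plus_fun_apply add: lincomb_add Pi_def)
qed (simp del: zero_fun_apply)

lemma subgroup_range_lincomb: "subgroup (range (lincomb g)) G"
proof (rule subgroup.intro)
  fix x y assume "x \<in> range (lincomb g)" "y \<in> range (lincomb g)"
  then obtain v w where "x = lincomb g v" "y = lincomb g w" by blast
  thus "x \<otimes> y \<in> range (lincomb g)" by (simp add: lincomb_add[symmetric])
next
  show "\<one> \<in> range (lincomb g)" using lincomb_zero by (metis rangeI)
next
  fix x assume "x \<in> range (lincomb g)"
  then obtain v where "x = lincomb g v" by blast
  hence "inv x = lincomb g (0 - v)" by (simp only: lincomb_diff lincomb_zero l_one lincomb_closed H_carrier inv_closed)
  thus "inv x \<in> range (lincomb g)" by simp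
qed (auto intro: H_carrier)

end

end

section \<open>Translations and displacements of MQ(L)\<close>

text \<open>The permutation group G is a parameter, pinned down by G_def, only so that the
  structure syntax applies to it.\<close>

locale link_diagram =
  fixes a1 a2 a3 :: "'c::finite \<Rightarrow> 'a::finite" and astar :: 'a
    and G :: "('a qterm set \<Rightarrow> 'a qterm set) monoid" (structure)
  assumes G_def: "G = BijGroup (MQ a1 a2 a3)"
begin

sublocale group G unfolding G_def by (rule group_BijGroup)

abbreviation S where "S \<equiv> MQ a1 a2 a3"

definition cls :: "'a qterm \<Rightarrow> 'a qterm set" where
  "cls x = mq_rel a1 a2 a3 `` {x}"

lemma equiv_mq_rel: "equiv UNIV (mq_rel a1 a2 a3)"
  unfolding equiv_def refl_on_def sym_def trans_def mq_rel_def
  using mq_eq.refl mq_eq.sym mq_eq.trans by blast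

lemma cls_in_MQ [simp]: "cls x \<in> S"
  unfolding cls_def MQ_def by (rule quotientI) simp

lemma MQ_obtain_cls:
  assumes "X \<in> S" obtains x where "X = cls x"
  using assms unfolding MQ_def cls_def by (elim quotientE) blast

lemma cls_eq_iff: "cls x = cls y \<longleftrightarrow> mq_eq a1 a2 a3 x y"
  unfolding cls_def using eq_equiv_class_iff[OF equiv_mq_rel] by (simp add: mq_rel_def)

lemma cls_some: "cls (SOME z. z \<in> cls x) = cls x"
proof -
  have "x \<in> cls x" unfolding cls_def using equiv_class_self[OF equiv_mq_rel] by simp
  hence "(SOME z. z \<in> cls x) \<in> cls x" by (rule someI)
  thus ?thesis unfolding cls_def mq_rel_def cls_eq_iff[unfolded cls_def mq_rel_def]
    by (simp add: mq_eq.sym)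
qed

lemma mq_op_cls: "mq_op a1 a2 a3 (cls x) (cls y) = cls (Op x y)"
  unfolding mq_op_def cls_def[symmetric] cls_eq_iff
  by (rule mq_eq.cong_Op) (simp_all only: cls_some[unfolded cls_eq_iff])

lemma mq_gen_cls: "mq_gen a1 a2 a3 a = cls (Gen a)"
  unfolding mq_gen_def cls_def ..

definition transl :: "'a qterm \<Rightarrow> 'a qterm set \<Rightarrow> 'a qterm set" where
  "transl y = beta a1 a2 a3 (cls y)"

lemma transl_cls [simp]: "transl y (cls x) = cls (Op x y)"
  by (simp add: transl_def beta_def mq_op_cls)

lemma transl_closed [simp]: "transl y \<in> carrier G"
proof -
  define untransl where "untransl X = cls (OpInv (SOME x. x \<in> X) y)" for X
  have untransl_cls: "untransl (cls x) = cls (OpInv x y)" for x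
    unfolding untransl_def cls_eq_iff
    by (rule mq_eq.cong_OpInv[OF _ mq_eq.refl]) (simp only: cls_some[unfolded cls_eq_iff])
  have "bij_betw (transl y) S S"
  proof (rule bij_betw_byWitness[where f' = untransl])
    show "\<forall>X\<in>S. untransl (transl y X) = X"
      by (clarify, elim MQ_obtain_cls) (simp add: untransl_cls cls_eq_iff mq_eq.inv2)
    show "\<forall>X\<in>S. transl y (untransl X) = X"
      by (clarify, elim MQ_obtain_cls) (simp add: untransl_cls cls_eq_iff mq_eq.inv1)
  qed (auto elim!: MQ_obtain_cls simp: untransl_cls)
  thus ?thesis by (simp add: G_def BijGroup_def Bij_def transl_def beta_def)
qed

lemma mult_apply: "f \<in> carrier G \<Longrightarrow> g \<in> carrier G \<Longrightarrow> X \<in> S \<Longrightarrow> (f \<otimes> g) X = f (g X)"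
  by (simp add: G_def BijGroup_def compose_def)

lemma eq_on_classesI:
  assumes "f \<in> carrier G" "g \<in> carrier G" "\<And>x. f (cls x) = g (cls x)" shows "f = g"
  using assms by (intro extensionalityI[where A = S]) (auto simp: G_def BijGroup_def Bij_def elim!: MQ_obtain_cls)

lemma transl_cong: "mq_eq a1 a2 a3 x y \<Longrightarrow> transl x = transl y"
  unfolding transl_def cls_eq_iff[symmetric] by simp

lemma transl_Op: "transl (Op x y) = transl y \<otimes> transl x \<otimes> inv transl y"
proof -
  have "transl (Op x y) \<otimes> transl y = transl y \<otimes> transl x"
    by (rule eq_on_classesI) (simp_all add: mult_apply cls_eq_iff mq_eq.sym[OF mq_eq.distr])
  thus ?thesis by (simp add: m_assoc[symmetric] inv_solve_right)
qed

lemma transl_OpInv: "transl (OpInv x y) = inv transl y \<otimes> transl x \<otimes> transl y"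
proof -
  have "transl x = transl y \<otimes> transl (OpInv x y) \<otimes> inv transl y"
    using transl_cong[OF mq_eq.inv1, of x y] by (simp add: transl_Op)
  thus ?thesis by (simp add: m_assoc)
qed

lemma transl_medial: "transl (Op y z) \<otimes> transl x = transl (Op x z) \<otimes> transl y"
  by (rule eq_on_classesI) (simp_all add: mult_apply cls_eq_iff mq_eq.medial)

definition b :: "'a qterm set \<Rightarrow> 'a qterm set" where
  "b = transl (Gen astar)"

definition displ :: "'a qterm \<Rightarrow> 'a qterm set \<Rightarrow> 'a qterm set" where
  "displ x = transl x \<otimes> inv b"

lemma b_closed [simp]: "b \<in> carrier G"
  by (simp add: b_def)

lemma displ_closed [simp]: "displ x \<in> carrier G"
  by (simp add: displ_def)

lemma displ_astar [simp]: "displ (Gen astar) = \<one>"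
  by (simp add: displ_def b_def)

text \<open>Mediality with z = a*: beta_(y |> a*) beta_x = beta_(x |> a*) beta_y.\<close>

lemma displ_commute: "displ x \<otimes> displ y = displ y \<otimes> displ x"
proof -
  have "b \<otimes> (transl x \<otimes> inv b \<otimes> transl y) = b \<otimes> (transl y \<otimes> inv b \<otimes> transl x)"
    using transl_medial[of x "Gen astar" y] by (simp add: transl_Op b_def m_assoc)
  hence "transl x \<otimes> inv b \<otimes> transl y = transl y \<otimes> inv b \<otimes> transl x"
    by (simp add: Units_eq)
  thus ?thesis by (simp add: displ_def m_assoc[symmetric])
qed

lemma conj_displ: "b \<otimes> displ x \<otimes> inv b = displ (Op x (Gen astar))"
  by (simp add: displ_def transl_Op b_def m_assoc)

lemma conj_inv_displ: "inv b \<otimes> displ x \<otimes> b = displ (OpInv x (Gen astar))"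
  by (simp add: displ_def transl_OpInv b_def m_assoc)

lemma Dis_eq_generate: "Dis a1 a2 a3 = generate G (range displ)"
proof -
  have quot: "displ y \<otimes> inv displ z = beta a1 a2 a3 (cls y) \<otimes> inv beta a1 a2 a3 (cls z)" for y z
    by (simp add: displ_def inv_mult_group m_assoc transl_def[symmetric])
  let ?T = "{beta a1 a2 a3 y \<otimes> inv beta a1 a2 a3 z | y z. y \<in> S \<and> z \<in> S}"
  have T_carrier: "?T \<subseteq> carrier G"
    by (auto elim!: MQ_obtain_cls simp: transl_def[symmetric])
  have T_sub: "?T \<subseteq> generate G (range displ)"
  proof clarify
    fix Y Z assume "Y \<in> S" "Z \<in> S"
    then obtain y z where "Y = cls y" "Z = cls z" by (elim MQ_obtain_cls)
    thus "beta a1 a2 a3 Y \<otimes> inv beta a1 a2 a3 Z \<in> generate G (range displ)"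
      by (simp add: quot[symmetric] generate.eng generate.inv generate.incl)
  qed
  have displ_sub: "range displ \<subseteq> ?T"
  proof (rule image_subsetI)
    fix x show "displ x \<in> ?T"
      using quot[of x "Gen astar"] by (intro CollectI exI[of _ "cls x"] exI[of _ "cls (Gen astar)"]) simp
  qed
  have "generate G ?T = generate G (range displ)"
  proof
    show "generate G ?T \<subseteq> generate G (range displ)"
      using T_sub by (intro generate_subgroup_incl generate_is_subgroup) auto
    show "generate G (range displ) \<subseteq> generate G ?T"
      using subset_trans[OF displ_sub subsetI[OF generate.incl]]
      by (rule generate_subgroup_incl[OF _ generate_is_subgroup[OF T_carrier]])
  qed
  thus ?thesis by (simp add: Dis_def G_def)
qed

lemma displ_in_Dis [simp]: "displ x \<in> Dis a1 a2 a3"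
  by (simp add: Dis_eq_generate generate.incl)

lemma Dis_commute: "x \<in> Dis a1 a2 a3 \<Longrightarrow> y \<in> Dis a1 a2 a3 \<Longrightarrow> x \<otimes> y = y \<otimes> x"
  unfolding Dis_eq_generate by (rule generate_commute) (auto simp: displ_commute)

lemma conj_Dis_closed:
  assumes g: "g = b \<or> g = inv b" and x: "x \<in> Dis a1 a2 a3"
  shows "g \<otimes> x \<otimes> inv g \<in> Dis a1 a2 a3"
  using x unfolding Dis_eq_generate
proof (rule generate_conj_closed[rotated 3])
  fix s assume "s \<in> range displ"
  thus "g \<otimes> s \<otimes> inv g \<in> generate G (range displ)"
    using g by (auto simp: conj_displ conj_inv_displ generate.incl)
qed (use g in auto)

lemma subgroup_Dis: "subgroup (Dis a1 a2 a3) G"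
  unfolding Dis_eq_generate by (rule generate_is_subgroup) auto

sublocale laurent_action G b "Dis a1 a2 a3"
  by (intro laurent_action.intro is_group laurent_action_axioms.intro b_closed subgroup_Dis
      Dis_commute conj_Dis_closed) (use conj_Dis_closed[of "inv b"] in simp_all)

lemma dis_smult_eq_act: "dis_smult a1 a2 a3 astar l d = act l d"
  unfolding act_def shift_def
  unfolding dis_smult_def Let_def b_def transl_def mq_gen_cls G_def ..

lemma displ_Op: "displ (Op x y) = displ y \<otimes> shift 1 (displ x \<otimes> inv displ y)"
  by (simp add: shift_plus_one displ_def transl_Op m_assoc inv_mult_group)

lemma displ_OpInv: "displ (OpInv x y) = shift (- 1) (inv displ y \<otimes> displ x) \<otimes> displ y"
  by (simp add: shift_minus_one displ_def transl_OpInv m_assoc inv_mult_group)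

section \<open>The epimorphism\<close>

abbreviation phi :: "('a \<Rightarrow> laurent) \<Rightarrow> 'a qterm set \<Rightarrow> 'a qterm set" where
  "phi \<equiv> lincomb (\<lambda>a. displ (Gen a))"

lemmas phi_add = lincomb_add[of "\<lambda>a. displ (Gen a)", OF displ_in_Dis]
lemmas phi_diff = lincomb_diff[of "\<lambda>a. displ (Gen a)", OF displ_in_Dis]
lemmas phi_vscale = lincomb_vscale[of "\<lambda>a. displ (Gen a)", OF displ_in_Dis]
lemmas phi_delta = lincomb_delta[of "\<lambda>a. displ (Gen a)", OF displ_in_Dis]
lemmas phi_sum = lincomb_sum[of "\<lambda>a. displ (Gen a)", OF displ_in_Dis]
lemmas phi_in_Dis = lincomb_closed[of "\<lambda>a. displ (Gen a)", OF displ_in_Dis]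

lemma phi_arc_difference: "phi (delta a - delta astar) = displ (Gen a)"
  by (simp add: phi_diff phi_delta)

lemma displ_in_range_phi: "displ x \<in> range phi"
proof (induction x)
  case (Gen a)
  show ?case using phi_delta[of a] by (metis rangeI)
next
  case (Op x y)
  then obtain u w where "displ x = phi u" "displ y = phi w" by blast
  hence "displ (Op x y) = phi (w + vscale (Poly_Mapping.single 1 1) (u - w))"
    by (simp add: displ_Op phi_add phi_diff phi_vscale act_single phi_in_Dis)
  thus ?case by simp
next
  case (OpInv x y)
  then obtain u w where "displ x = phi u" "displ y = phi w" by blast
  hence "displ (OpInv x y) = phi (vscale (Poly_Mapping.single (- 1) 1) (u - w) + w)"
    by (simp add: displ_OpInv phi_add phi_diff phi_vscale act_single H_commute[of "inv phi w"] phi_in_Dis)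
  thus ?case by simp
qed

lemma Dis_subset_range_phi: "Dis a1 a2 a3 \<subseteq> range phi"
  by (subst (1) Dis_eq_generate, rule generate_subgroup_incl[OF _ subgroup_range_lincomb])
    (auto intro: displ_in_range_phi)

lemma phi_crossing: "phi (tau \<circ> rhoD kappa a1 a2 a3 c) = \<one>"
proof -
  let ?d1 = "displ (Gen (a1 c))" and ?d2 = "displ (Gen (a2 c))"
  have "displ (Gen (a3 c)) = displ (Op (Gen (a2 c)) (Gen (a1 c)))"
    unfolding displ_def using transl_cong[OF mq_eq.crossing] by simp
  also have "\<dots> = ?d1 \<otimes> shift 1 ?d2 \<otimes> inv shift 1 ?d1"
    by (simp add: displ_Op shift_mult shift_inv m_assoc)
  finally have "phi (tau \<circ> rhoD kappa a1 a2 a3 c)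
      = ?d1 \<otimes> inv shift 1 ?d1 \<otimes> shift 1 ?d2 \<otimes> inv (?d1 \<otimes> shift 1 ?d2 \<otimes> inv shift 1 ?d1)"
    by (simp add: tau_rhoD phi_diff phi_add phi_vscale phi_delta act_diff act_single lt_def)
  also have "\<dots> = \<one>"
    using H_commute[of "inv shift 1 ?d1" "shift 1 ?d2"] by (simp add: m_assoc)
  finally show ?thesis .
qed

lemma phi_relsub: "r \<in> relsub kappa a1 a2 a3 \<Longrightarrow> phi r = \<one>"
  by (auto simp: relsub_def phi_sum phi_vscale phi_crossing HG.finprod_one[simplified])

lemma zero_in_relsub: "0 \<in> relsub kappa a1 a2 a3"
proof -
  have "vscale 0 v = 0" for v :: "'a \<Rightarrow> laurent"
    by (simp add: vscale_def fun_eq_iff)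
  thus ?thesis unfolding relsub_def by (intro image_eqI[of _ _ "\<lambda>_. 0"]) simp_all
qed

text \<open>Elements of M_A^red(L) are cosets of the relation module; e evaluates phi on a chosen
  representative, which is harmless by phi_relsub.\<close>

definition e :: "('a \<Rightarrow> laurent) set \<Rightarrow> 'a qterm set \<Rightarrow> 'a qterm set" where
  "e X = phi (SOME v. v \<in> X)"

lemma e_mcls [simp]: "e (mcls kappa a1 a2 a3 v) = phi v"
proof -
  have "v \<in> mcls kappa a1 a2 a3 v"
    unfolding mcls_def using zero_in_relsub by force
  hence "(SOME w. w \<in> mcls kappa a1 a2 a3 v) \<in> mcls kappa a1 a2 a3 v"
    by (rule someI[where P = "\<lambda>w. w \<in> mcls kappa a1 a2 a3 v"])
  then obtain r where "(SOME w. w \<in> mcls kappa a1 a2 a3 v) = v + r" "r \<in> relsub kappa a1 a2 a3"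
    unfolding mcls_def by blast
  thus ?thesis by (simp add: e_def phi_add phi_relsub phi_in_Dis)
qed

lemma e_in_Dis: "e X \<in> Dis a1 a2 a3"
  by (simp add: e_def phi_in_Dis)

lemma e_madd: "e (madd kappa a1 a2 a3 X Y) = e X \<otimes> e Y"
  unfolding madd_def e_mcls by (simp add: e_def phi_add)

lemma e_msmult: "e (msmult kappa a1 a2 a3 l X) = dis_smult a1 a2 a3 astar l (e X)"
  unfolding msmult_def e_mcls by (simp add: e_def phi_vscale dis_smult_eq_act)

lemma e_arc_difference: "e (mcls kappa a1 a2 a3 (delta a - delta astar)) = dgen a1 a2 a3 astar a"
  unfolding e_mcls phi_arc_difference
  unfolding displ_def b_def transl_def
  unfolding dgen_def mq_gen_cls G_def ..

lemma e_image_M0: "e ` M0 kappa a1 a2 a3 astar = Dis a1 a2 a3"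
proof
  show "e ` M0 kappa a1 a2 a3 astar \<subseteq> Dis a1 a2 a3"
    using e_in_Dis by blast
  show "Dis a1 a2 a3 \<subseteq> e ` M0 kappa a1 a2 a3 astar"
  proof
    fix g assume "g \<in> Dis a1 a2 a3"
    then obtain v where g: "g = phi v" using Dis_subset_range_phi by blast
    let ?X = "mcls kappa a1 a2 a3 (\<Sum>a\<in>UNIV. vscale (v a) (delta a - delta astar))"
    have "e ?X = finprod HG (\<lambda>a. act (v a) (displ (Gen a))) UNIV"
      by (simp add: phi_sum phi_vscale phi_arc_difference)
    also have "\<dots> = g"
      by (simp add: g lincomb_def)
    finally show "g \<in> e ` M0 kappa a1 a2 a3 astar"
      unfolding M0_def by blast
  qed
qed

end

theorem corollary30:
  fixes mu :: nat
    and kappa :: "'a::finite \<Rightarrow> nat"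
    and a1 a2 a3 :: "'c::finite \<Rightarrow> 'a"
    and astar :: 'a
  assumes "\<forall>a. kappa a \<in> {1..mu}"
  shows "\<exists>e. (\<forall>X\<in>M0 kappa a1 a2 a3 astar. e X \<in> Dis a1 a2 a3)
           \<and> (\<forall>X\<in>M0 kappa a1 a2 a3 astar. \<forall>Y\<in>M0 kappa a1 a2 a3 astar.
                 e (madd kappa a1 a2 a3 X Y) = e X \<otimes>\<^bsub>PermG a1 a2 a3\<^esub> e Y)
           \<and> (\<forall>l. \<forall>X\<in>M0 kappa a1 a2 a3 astar.
                 e (msmult kappa a1 a2 a3 l X) = dis_smult a1 a2 a3 astar l (e X))
           \<and> e ` M0 kappa a1 a2 a3 astar = Dis a1 a2 a3
           \<and> (\<forall>a. e (mcls kappa a1 a2 a3 (delta a - delta astar)) = dgen a1 a2 a3 astar a)"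
proof -
  interpret link_diagram a1 a2 a3 astar "PermG a1 a2 a3"
    by unfold_locales simp
  show ?thesis
    using e_in_Dis e_madd e_msmult e_image_M0 e_arc_difference by blast
qed

end
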